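(* Let $Y$ be a compact finite-rank $k$-step nilspace with a fixed metric $d_Y$, and for each $i\in[k]$ let $Z_i$ be the $i$-th structure group of $Y$ with a fixed compatible metric $d_{Z_i}$. Then there is a collection of compact-nilspace isomorphisms $\psi_{i,y}:\pi_{i-1,i}^{-1}(y)\to\mathcal{D}_i(Z_i)$, for $i\in[k]$ and $y\in Y_{i-1}$, such that for every $\epsilon>0$ there exists $\delta>0$ with the following property: for all $i\in[k]$, $y\in Y_{i-1}$ and $a,b\in Y$ with $\pi_{i-1}(a)=\pi_{i-1}(b)=y$, if $d_Y(a,b)<\delta$ then $d_{Z_i}\big(\psi_{i,y}(\pi_i(a)),\psi_{i,y}(\pi_i(b))\big)<\epsilon$.
   Context: For a $k$-step compact nilspace $Y$, $\pi_i:Y\to Y_i$ denotes the projection to the $i$-th characteristic factor and $\pi_{i-1,i}:Y_i\to Y_{i-1}$ the projection between factors (so $\pi_{i-1}=\pi_{i-1,i}\circ\pi_i$). The $i$-th structure group $Z_i$ is the compact abelian group acting freely on $Y_i$ whose orbits are the fibers of $\pi_{i-1,i}$; finite rank means each $Z_i$ is a Lie group. For an abelian group $Z$, $\mathcal{D}_i(Z)$ is the nilspace on $Z$ whose $n$-cubes are the maps $c:\{0,1\}^n\to Z$ such that for every $(i+1)$-dimensional face $F$ of $\{0,1\}^n$ the alternating sum $\sum_{v\in F}(-1)^{|v|}c(v)$ vanishes (equivalently, polynomial maps of degree at most $i$); for compact $Z$ it is a compact nilspace. Fibers of $\pi_{i-1,i}$ are sub-nilspaces of $Y_i$. *)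

theory Defs
  imports "HOL-Analysis.Analysis"
begin

text \<open>Vertices of the discrete cube {0,1}^n are encoded as maps nat => bool vanishing
  outside {0..<n}; an n-cube on a set X is an extensional map from vertices to X.\<close>

definition vert :: "nat \<Rightarrow> (nat \<Rightarrow> bool) set" where
  "vert n = {v. \<forall>j. v j \<longrightarrow> j < n}"

definition top_vert :: "nat \<Rightarrow> (nat \<Rightarrow> bool)" where
  "top_vert n = (\<lambda>j. j < n)"

definition cube_morphism :: "nat \<Rightarrow> nat \<Rightarrow> ((nat \<Rightarrow> bool) \<Rightarrow> (nat \<Rightarrow> bool)) \<Rightarrow> bool" where
  "cube_morphism m n \<phi> \<longleftrightarrow>
     (\<forall>v\<in>vert m. \<phi> v \<in> vert n) \<and>
     (\<forall>j<n. \<exists>f. (f = (\<lambda>v. False) \<or> f = (\<lambda>v. True) \<or>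
                  (\<exists>i<m. f = (\<lambda>v. v i) \<or> f = (\<lambda>v. \<not> v i))) \<and>
                (\<forall>v\<in>vert m. \<phi> v j = f v))"

definition ins_bit :: "nat \<Rightarrow> bool \<Rightarrow> (nat \<Rightarrow> bool) \<Rightarrow> (nat \<Rightarrow> bool)" where
  "ins_bit j b w = (\<lambda>i. if i < j then w i else if i = j then b else w (i - 1))"

definition is_corner :: "'a set \<Rightarrow> (nat \<Rightarrow> ((nat \<Rightarrow> bool) \<Rightarrow> 'a) set) \<Rightarrow> nat
    \<Rightarrow> ((nat \<Rightarrow> bool) \<Rightarrow> 'a) \<Rightarrow> bool" where
  "is_corner X C n q \<longleftrightarrow>
     q \<in> (vert n - {top_vert n}) \<rightarrow>\<^sub>E X \<and>
     (\<forall>j<n. (\<lambda>w\<in>vert (n - 1). q (ins_bit j False w)) \<in> C (n - 1))"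

definition nilspace :: "'a set \<Rightarrow> (nat \<Rightarrow> ((nat \<Rightarrow> bool) \<Rightarrow> 'a) set) \<Rightarrow> bool" where
  "nilspace X C \<longleftrightarrow>
     (\<forall>n. C n \<subseteq> vert n \<rightarrow>\<^sub>E X) \<and>
     (\<forall>m n \<phi> c. cube_morphism m n \<phi> \<longrightarrow> c \<in> C n \<longrightarrow> (\<lambda>v\<in>vert m. c (\<phi> v)) \<in> C m) \<and>
     C 1 = vert 1 \<rightarrow>\<^sub>E X \<and>
     (\<forall>n\<ge>1. \<forall>q. is_corner X C n q \<longrightarrow>
        (\<exists>c\<in>C n. \<forall>v\<in>vert n - {top_vert n}. c v = q v))"

definition k_step_nilspace :: "nat \<Rightarrow> 'a set \<Rightarrow> (nat \<Rightarrow> ((nat \<Rightarrow> bool) \<Rightarrow> 'a) set) \<Rightarrow> bool" where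
  "k_step_nilspace k X C \<longleftrightarrow> nilspace X C \<and>
     (\<forall>c\<in>C (Suc k). \<forall>c'\<in>C (Suc k).
        (\<forall>v\<in>vert (Suc k) - {top_vert (Suc k)}. c v = c' v) \<longrightarrow> c = c')"

text \<open>Compact nilspace: X compact (in the metric space 'a, hence compact metrizable) and
  every cube set closed in the product topology on X^{0,1}^n.\<close>
definition compact_nilspace :: "'a::metric_space set \<Rightarrow> (nat \<Rightarrow> ((nat \<Rightarrow> bool) \<Rightarrow> 'a) set) \<Rightarrow> bool" where
  "compact_nilspace X C \<longleftrightarrow> nilspace X C \<and> compact X \<and>
     (\<forall>n. closedin (product_topology (\<lambda>_. top_of_set X) (vert n)) (C n))"

definition char_rel :: "'a set \<Rightarrow> (nat \<Rightarrow> ((nat \<Rightarrow> bool) \<Rightarrow> 'a) set) \<Rightarrow> nat \<Rightarrow> 'a \<Rightarrow> 'a \<Rightarrow> bool" where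
  "char_rel X C i x y \<longleftrightarrow> x \<in> X \<and> y \<in> X \<and>
     (\<exists>c\<in>C (Suc i). \<exists>c'\<in>C (Suc i).
        (\<forall>v\<in>vert (Suc i). v \<noteq> top_vert (Suc i) \<longrightarrow> c v = c' v) \<and>
        c (top_vert (Suc i)) = x \<and> c' (top_vert (Suc i)) = y)"

text \<open>pi_i : the projection to the i-th characteristic factor Y_i = X / ~_i
  (points of Y_i are the equivalence classes).\<close>
definition proj :: "'a set \<Rightarrow> (nat \<Rightarrow> ((nat \<Rightarrow> bool) \<Rightarrow> 'a) set) \<Rightarrow> nat \<Rightarrow> 'a \<Rightarrow> 'a set" where
  "proj X C i x = {y. char_rel X C i x y}"

definition factor :: "'a set \<Rightarrow> (nat \<Rightarrow> ((nat \<Rightarrow> bool) \<Rightarrow> 'a) set) \<Rightarrow> nat \<Rightarrow> 'a set set" where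
  "factor X C i = proj X C i ` X"

definition factor_cubes :: "'a set \<Rightarrow> (nat \<Rightarrow> ((nat \<Rightarrow> bool) \<Rightarrow> 'a) set) \<Rightarrow> nat \<Rightarrow> nat
    \<Rightarrow> ((nat \<Rightarrow> bool) \<Rightarrow> 'a set) set" where
  "factor_cubes X C i n = {(\<lambda>v\<in>vert n. proj X C i (c v)) | c. c \<in> C n}"

definition quotient_top :: "'a topology \<Rightarrow> ('a \<Rightarrow> 'b) \<Rightarrow> 'b topology" where
  "quotient_top T f = topology (\<lambda>U. U \<subseteq> f ` topspace T \<and>
      openin T {x \<in> topspace T. f x \<in> U})"

definition factor_top :: "'a::metric_space set \<Rightarrow> (nat \<Rightarrow> ((nat \<Rightarrow> bool) \<Rightarrow> 'a) set) \<Rightarrow> nat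
    \<Rightarrow> 'a set topology" where
  "factor_top X C i = quotient_top (top_of_set X) (proj X C i)"

definition fiber :: "'a set \<Rightarrow> (nat \<Rightarrow> ((nat \<Rightarrow> bool) \<Rightarrow> 'a) set) \<Rightarrow> nat \<Rightarrow> 'a set \<Rightarrow> 'a set set" where
  "fiber X C i y = {proj X C i a | a. a \<in> X \<and> proj X C (i - 1) a = y}"

definition fiber_cubes :: "'a set \<Rightarrow> (nat \<Rightarrow> ((nat \<Rightarrow> bool) \<Rightarrow> 'a) set) \<Rightarrow> nat \<Rightarrow> 'a set \<Rightarrow> nat
    \<Rightarrow> ((nat \<Rightarrow> bool) \<Rightarrow> 'a set) set" where
  "fiber_cubes X C i y n = {c \<in> factor_cubes X C i n. \<forall>v\<in>vert n. c v \<in> fiber X C i y}"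

definition D_cubes :: "'z::ab_group_add set \<Rightarrow> nat \<Rightarrow> nat \<Rightarrow> ((nat \<Rightarrow> bool) \<Rightarrow> 'z) set" where
  "D_cubes Z i n = {c \<in> vert n \<rightarrow>\<^sub>E Z. \<forall>J w. J \<subseteq> {..<n} \<and> card J = Suc i \<and> w \<in> vert n \<longrightarrow>
      (\<Sum>v\<in>{v\<in>vert n. \<forall>j<n. j \<notin> J \<longrightarrow> v j = w j}.
          if even (card {j. j < n \<and> v j}) then c v else - c v) = 0}"

definition is_subgroup_add :: "'z::ab_group_add set \<Rightarrow> bool" where
  "is_subgroup_add H \<longleftrightarrow> 0 \<in> H \<and> (\<forall>a\<in>H. \<forall>b\<in>H. a + b \<in> H) \<and> (\<forall>a\<in>H. - a \<in> H)"

text \<open>Z (a subgroup of an ambient abelian group) with metric dZ is a compact metrizable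
  abelian topological group.\<close>
definition compact_metric_group :: "'z::ab_group_add set \<Rightarrow> ('z \<Rightarrow> 'z \<Rightarrow> real) \<Rightarrow> bool" where
  "compact_metric_group Z dZ \<longleftrightarrow> is_subgroup_add Z \<and> Metric_space Z dZ \<and>
     compact_space (Metric_space.mtopology Z dZ) \<and>
     continuous_map (prod_topology (Metric_space.mtopology Z dZ) (Metric_space.mtopology Z dZ))
        (Metric_space.mtopology Z dZ) (\<lambda>(a, b). a + b) \<and>
     continuous_map (Metric_space.mtopology Z dZ) (Metric_space.mtopology Z dZ) uminus"

text \<open>(Z, dZ, act) is the i-th structure group of the nilspace (X, C): a compact abelian
  group acting continuously and freely on Y_i, with orbits the fibres of pi_{i-1,i},
  making Y_i a degree-i bundle over Y_{i-1}: a map over the same base as a cube of Y_i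
  is a cube iff it differs from it by a cube of D_i(Z).\<close>
definition structure_group :: "'a::metric_space set \<Rightarrow> (nat \<Rightarrow> ((nat \<Rightarrow> bool) \<Rightarrow> 'a) set) \<Rightarrow> nat
    \<Rightarrow> 'z::ab_group_add set \<Rightarrow> ('z \<Rightarrow> 'z \<Rightarrow> real) \<Rightarrow> ('z \<Rightarrow> 'a set \<Rightarrow> 'a set) \<Rightarrow> bool" where
  "structure_group X C i Z dZ act \<longleftrightarrow>
     compact_metric_group Z dZ \<and>
     (\<forall>z\<in>Z. \<forall>A\<in>factor X C i. act z A \<in> factor X C i) \<and>
     (\<forall>A\<in>factor X C i. act 0 A = A) \<and>
     (\<forall>z\<in>Z. \<forall>w\<in>Z. \<forall>A\<in>factor X C i. act (z + w) A = act z (act w A)) \<and>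
     (\<forall>z\<in>Z. \<forall>A\<in>factor X C i. act z A = A \<longrightarrow> z = 0) \<and>
     (\<forall>a\<in>X. \<forall>b\<in>X. (\<exists>z\<in>Z. act z (proj X C i a) = proj X C i b) \<longleftrightarrow>
                      proj X C (i - 1) a = proj X C (i - 1) b) \<and>
     continuous_map (prod_topology (Metric_space.mtopology Z dZ) (factor_top X C i))
        (factor_top X C i) (\<lambda>(z, A). act z A) \<and>
     (\<forall>n. \<forall>c\<in>C n. \<forall>g\<in>vert n \<rightarrow>\<^sub>E Z.
        (\<lambda>v\<in>vert n. act (g v) (proj X C i (c v))) \<in> factor_cubes X C i n
          \<longleftrightarrow> g \<in> D_cubes Z i n)"

text \<open>Lie (finite rank) condition for the compact group Z, stated as the no-small-subgroups
  property (for compact groups equivalent to being a Lie group).\<close>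
definition NSS_group :: "'z::ab_group_add set \<Rightarrow> ('z \<Rightarrow> 'z \<Rightarrow> real) \<Rightarrow> bool" where
  "NSS_group Z dZ \<longleftrightarrow> (\<exists>r>0. \<forall>H. H \<subseteq> Z \<and> is_subgroup_add H \<and>
      H \<subseteq> Metric_space.mball Z dZ 0 r \<longrightarrow> H = {0})"

definition fiber_iso :: "'a::metric_space set \<Rightarrow> (nat \<Rightarrow> ((nat \<Rightarrow> bool) \<Rightarrow> 'a) set) \<Rightarrow> nat \<Rightarrow> 'a set
    \<Rightarrow> 'z::ab_group_add set \<Rightarrow> ('z \<Rightarrow> 'z \<Rightarrow> real) \<Rightarrow> ('a set \<Rightarrow> 'z) \<Rightarrow> bool" where
  "fiber_iso X C i y Z dZ \<psi> \<longleftrightarrow>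
     homeomorphic_map (subtopology (factor_top X C i) (fiber X C i y))
        (Metric_space.mtopology Z dZ) \<psi> \<and>
     (\<forall>n. \<forall>c\<in>vert n \<rightarrow>\<^sub>E fiber X C i y.
        c \<in> fiber_cubes X C i y n \<longleftrightarrow> (\<lambda>v\<in>vert n. \<psi> (c v)) \<in> D_cubes Z i n)"

end

theory Submission
  imports Defs
begin

text \<open>Fix a base point A in each fibre of Y_i over Y_{i-1} and let psi_{i,y} send B to the unique
  z in Z_i with z + A = B. The orbit map z |-> z + A is a continuous bijection from the compact
  group Z_i onto the fibre, and the fibre is Hausdorff: with the help of the structure groups,
  two points have the same image in Y_i iff they are the top vertices of two (i+1)-cubes agreeing
  elsewhere, a compact relation, so pi_i is a closed map. Hence psi_{i,y} is a homeomorphism, and it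
  respects cubes because the action makes Y_i a degree-i bundle. For uniformity, psi(pi_i a) and
  psi(pi_i b) differ by the z moving pi_i b to pi_i a; on the compact set of such (a, b, z) freeness
  gives z = 0 on the diagonal, so d(a, b) small forces translation by z to be uniformly small, and
  finitely many i share one delta.\<close>

lemma finite_vert: "finite (vert n)"
proof (rule finite_subset)
  show "vert n \<subseteq> (\<lambda>S j. j \<in> S) ` Pow {..<n}"
  proof
    fix v assume "v \<in> vert n"
    then have "v = (\<lambda>j. j \<in> {j. v j})" "{j. v j} \<in> Pow {..<n}"
      by (auto simp: vert_def)
    then show "v \<in> (\<lambda>S j. j \<in> S) ` Pow {..<n}" by blast
  qed
qed simp

lemma top_vert_in_vert [simp]: "top_vert n \<in> vert n"
  by (simp add: vert_def top_vert_def)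

lemma nilspace_cube_PiE: "nilspace X C \<Longrightarrow> c \<in> C n \<Longrightarrow> c \<in> vert n \<rightarrow>\<^sub>E X"
  unfolding nilspace_def by (elim conjE) blast

lemma nilspace_cube_compose:
  assumes "nilspace X C" "cube_morphism m n \<phi>" "c \<in> C n"
  shows "(\<lambda>v\<in>vert m. c (\<phi> v)) \<in> C m"
proof -
  have "\<forall>m n \<phi> c. cube_morphism m n \<phi> \<longrightarrow> c \<in> C n \<longrightarrow> (\<lambda>v\<in>vert m. c (\<phi> v)) \<in> C m"
    using assms(1) unfolding nilspace_def by (elim conjE)
  then show ?thesis using assms(2,3) by blast
qed

lemma nilspace_const_cube:
  assumes "nilspace X C" "a \<in> X"
  shows "(\<lambda>v\<in>vert n. a) \<in> C n"
proof -
  have "(\<lambda>v\<in>vert 1. a) \<in> C 1"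
    using assms unfolding nilspace_def by auto
  moreover have "cube_morphism n 1 (\<lambda>v j. False)"
    unfolding cube_morphism_def vert_def by auto
  ultimately have "(\<lambda>v\<in>vert n. (\<lambda>v\<in>vert 1. a) (\<lambda>j. False)) \<in> C n"
    using nilspace_cube_compose[OF assms(1)] by blast
  then show ?thesis by (simp add: vert_def)
qed

lemma ins_bit_in_vert: "j \<le> n \<Longrightarrow> w \<in> vert n \<Longrightarrow> ins_bit j b w \<in> vert (Suc n)"
  by (auto simp: vert_def ins_bit_def)

lemma cube_morphism_ins_bit:
  assumes "j \<le> n"
  shows "cube_morphism n (Suc n) (ins_bit j b)"
  unfolding cube_morphism_def
proof (intro conjI ballI allI impI)
  fix v assume "v \<in> vert n"
  then show "ins_bit j b v \<in> vert (Suc n)"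
    by (rule ins_bit_in_vert[OF assms])
next
  fix l assume l: "l < Suc n"
  show "\<exists>f. (f = (\<lambda>v. False) \<or> f = (\<lambda>v. True) \<or> (\<exists>i<n. f = (\<lambda>v. v i) \<or> f = (\<lambda>v. \<not> v i))) \<and>
            (\<forall>v\<in>vert n. ins_bit j b v l = f v)"
  proof (cases l j rule: linorder_cases)
    case less
    then have "\<forall>v\<in>vert n. ins_bit j b v l = v l" "l < n"
      using assms by (auto simp: ins_bit_def)
    then show ?thesis by blast
  next
    case equal
    then show ?thesis
      by (intro exI[of _ "\<lambda>v. b"]) (cases b, auto simp: ins_bit_def)
  next
    case greater
    then have "\<forall>v\<in>vert n. ins_bit j b v l = v (l - 1)" "l - 1 < n"
      using l by (auto simp: ins_bit_def)
    then show ?thesis by blast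
  qed
qed

lemma ins_bit_True_eq_top_vert_iff:
  "j \<le> n \<Longrightarrow> ins_bit j True w = top_vert (Suc n) \<longleftrightarrow> w = top_vert n"
proof
  assume "j \<le> n" and top: "ins_bit j True w = top_vert (Suc n)"
  show "w = top_vert n"
  proof
    fix l
    show "w l = top_vert n l"
    proof (cases "l < j")
      case True
      then show ?thesis using fun_cong[OF top, of l] \<open>j \<le> n\<close> by (simp add: ins_bit_def top_vert_def)
    next
      case False
      then show ?thesis using fun_cong[OF top, of "Suc l"] by (simp add: ins_bit_def top_vert_def)
    qed
  qed
qed (auto simp: ins_bit_def top_vert_def)

section \<open>The characteristic relations\<close>

lemma char_rel_refl:
  assumes "nilspace X C" "x \<in> X"
  shows "char_rel X C i x x"
proof -
  have "(\<lambda>v\<in>vert (Suc i). x) \<in> C (Suc i)"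
    using assms by (rule nilspace_const_cube)
  then show ?thesis
    unfolding char_rel_def using assms(2) by (intro conjI bexI) auto
qed

lemma char_rel_in: "char_rel X C i x y \<Longrightarrow> x \<in> X \<and> y \<in> X"
  by (simp add: char_rel_def)

lemma char_rel_Suc_imp_char_rel:
  assumes N: "nilspace X C" and R: "char_rel X C (Suc i) x y"
  shows "char_rel X C i x y"
proof -
  obtain c c' where c: "c \<in> C (Suc (Suc i))" "c' \<in> C (Suc (Suc i))"
    and agree: "\<forall>v\<in>vert (Suc (Suc i)). v \<noteq> top_vert (Suc (Suc i)) \<longrightarrow> c v = c' v"
    and top: "c (top_vert (Suc (Suc i))) = x" "c' (top_vert (Suc (Suc i))) = y"
    and xy: "x \<in> X" "y \<in> X"
    using R unfolding char_rel_def by blast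
  define face where "face d = (\<lambda>w\<in>vert (Suc i). d (ins_bit 0 True w))"
    for d :: "(nat \<Rightarrow> bool) \<Rightarrow> 'a"
  have \<phi>: "cube_morphism (Suc i) (Suc (Suc i)) (ins_bit 0 True)"
    by (rule cube_morphism_ins_bit) simp
  have "face c \<in> C (Suc i)" "face c' \<in> C (Suc i)"
    unfolding face_def using nilspace_cube_compose[OF N \<phi>] c by auto
  moreover have "face c w = face c' w" if "w \<in> vert (Suc i)" "w \<noteq> top_vert (Suc i)" for w
    using that agree ins_bit_in_vert[of 0 "Suc i" w True] ins_bit_True_eq_top_vert_iff[of 0 "Suc i" w]
    unfolding face_def by simp
  moreover have "ins_bit 0 True (top_vert (Suc i)) = top_vert (Suc (Suc i))"
    using ins_bit_True_eq_top_vert_iff[of 0 "Suc i"] by simp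
  then have "face c (top_vert (Suc i)) = x" "face c' (top_vert (Suc i)) = y"
    using top by (simp_all add: face_def)
  ultimately show ?thesis
    unfolding char_rel_def using xy by blast
qed

lemma proj_0:
  assumes N: "nilspace X C" and x: "x \<in> X"
  shows "proj X C 0 x = X"
proof -
  have "char_rel X C 0 x y" if y: "y \<in> X" for y
  proof -
    have "C (Suc 0) = vert (Suc 0) \<rightarrow>\<^sub>E X"
      using N unfolding nilspace_def by simp
    moreover define c c' where "c = (\<lambda>v\<in>vert (Suc 0). x)"
      and "c' = (\<lambda>v\<in>vert (Suc 0). if v = top_vert (Suc 0) then y else x)"
    ultimately have "c \<in> C (Suc 0)" "c' \<in> C (Suc 0)"
      using x y by auto
    moreover have "\<forall>v\<in>vert (Suc 0). v \<noteq> top_vert (Suc 0) \<longrightarrow> c v = c' v"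
      "c (top_vert (Suc 0)) = x" "c' (top_vert (Suc 0)) = y"
      by (simp_all add: c_def c'_def)
    ultimately show ?thesis
      unfolding char_rel_def using x y by blast
  qed
  then show ?thesis
    unfolding proj_def char_rel_def by blast
qed

lemma compact_metric_group_subgroup: "compact_metric_group Z dZ \<Longrightarrow> is_subgroup_add Z"
  and compact_metric_group_Metric_space: "compact_metric_group Z dZ \<Longrightarrow> Metric_space Z dZ"
  and compact_metric_group_compact_space:
    "compact_metric_group Z dZ \<Longrightarrow> compact_space (Metric_space.mtopology Z dZ)"
  and compact_metric_group_continuous_add:
    "compact_metric_group Z dZ \<Longrightarrow>
      continuous_map (prod_topology (Metric_space.mtopology Z dZ) (Metric_space.mtopology Z dZ))
        (Metric_space.mtopology Z dZ) (\<lambda>(a, b). a + b)"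
  unfolding compact_metric_group_def by simp_all

lemma structure_group_compact_metric_group:
    "structure_group X C i Z dZ act \<Longrightarrow> compact_metric_group Z dZ"
  and structure_group_act_in_factor:
    "structure_group X C i Z dZ act \<Longrightarrow> z \<in> Z \<Longrightarrow> A \<in> factor X C i \<Longrightarrow> act z A \<in> factor X C i"
  and structure_group_act_0:
    "structure_group X C i Z dZ act \<Longrightarrow> A \<in> factor X C i \<Longrightarrow> act 0 A = A"
  and structure_group_act_add:
    "structure_group X C i Z dZ act \<Longrightarrow> z \<in> Z \<Longrightarrow> w \<in> Z \<Longrightarrow> A \<in> factor X C i \<Longrightarrow>
      act (z + w) A = act z (act w A)"
  and structure_group_act_free:
    "structure_group X C i Z dZ act \<Longrightarrow> z \<in> Z \<Longrightarrow> A \<in> factor X C i \<Longrightarrow> act z A = A \<Longrightarrow> z = 0"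
  and structure_group_orbit_iff:
    "structure_group X C i Z dZ act \<Longrightarrow> a \<in> X \<Longrightarrow> b \<in> X \<Longrightarrow>
      (\<exists>z\<in>Z. act z (proj X C i a) = proj X C i b) \<longleftrightarrow> proj X C (i - 1) a = proj X C (i - 1) b"
  and structure_group_continuous_act:
    "structure_group X C i Z dZ act \<Longrightarrow>
      continuous_map (prod_topology (Metric_space.mtopology Z dZ) (factor_top X C i))
        (factor_top X C i) (\<lambda>(z, A). act z A)"
  and structure_group_act_cube_iff:
    "structure_group X C i Z dZ act \<Longrightarrow> c \<in> C n \<Longrightarrow> g \<in> vert n \<rightarrow>\<^sub>E Z \<Longrightarrow>
      (\<lambda>v\<in>vert n. act (g v) (proj X C i (c v))) \<in> factor_cubes X C i n \<longleftrightarrow> g \<in> D_cubes Z i n"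
  unfolding structure_group_def by (simp_all, blast)

lemma proj_in_factor: "a \<in> X \<Longrightarrow> proj X C i a \<in> factor X C i"
  unfolding factor_def by blast

lemma structure_group_act_inj_on:
  assumes S: "structure_group X C i Z dZ act" and A: "A \<in> factor X C i"
  shows "inj_on (\<lambda>z. act z A) Z"
proof
  fix z w assume z: "z \<in> Z" and w: "w \<in> Z" and eq: "act z A = act w A"
  have G: "is_subgroup_add Z"
    using S by (intro compact_metric_group_subgroup structure_group_compact_metric_group)
  then have nw: "- w \<in> Z" "- w + z \<in> Z"
    using z w unfolding is_subgroup_add_def by blast+
  have "act (- w + z) A = act (- w) (act w A)"
    using structure_group_act_add[OF S nw(1) z A] eq by simp
  also have "\<dots> = A"
    using structure_group_act_add[OF S nw(1) w A] structure_group_act_0[OF S A] by simp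
  finally have "- w + z = 0"
    by (rule structure_group_act_free[OF S nw(2) A])
  then show "z = w" by (simp add: add.commute)
qed

lemma D_cubes_top_delta_eq_0:
  assumes "(\<lambda>v\<in>vert (Suc i). if v = top_vert (Suc i) then z else 0) \<in> D_cubes Z i (Suc i)"
  shows "z = (0::'z::ab_group_add)"
proof -
  define g where "g = (\<lambda>v\<in>vert (Suc i). if v = top_vert (Suc i) then z else (0::'z))"
  define F where "F v = (if even (card {j. j < Suc i \<and> v j}) then g v else - g v)" for v
  have "{v\<in>vert (Suc i). \<forall>j<Suc i. j \<notin> {..<Suc i} \<longrightarrow> v j = top_vert (Suc i) j} = vert (Suc i)"
    by auto
  then have "(\<Sum>v\<in>vert (Suc i). F v) = 0"
    using assms unfolding D_cubes_def g_def F_def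
    by (elim CollectE conjE allE[of _ "{..<Suc i}"] allE[of _ "top_vert (Suc i)"]) simp
  also have "(\<Sum>v\<in>vert (Suc i). F v) = (\<Sum>v\<in>{top_vert (Suc i)}. F v)"
    by (rule sum.mono_neutral_right) (auto simp: finite_vert F_def g_def)
  finally show ?thesis
    unfolding F_def g_def by (simp split: if_splits)
qed

text \<open>The z moving pi_{i+1} x to pi_{i+1} y, put at the top vertex of a cube and 0 elsewhere, is
  a cube of D_{i+1}(Z) because it moves one cube of Y_{i+1} onto another; so z = 0.\<close>
lemma structure_group_char_rel_imp_proj_eq:
  assumes N: "nilspace X C" and S: "structure_group X C (Suc i) Z dZ act"
    and R: "char_rel X C (Suc i) x y" and E: "proj X C i x = proj X C i y"
  shows "proj X C (Suc i) x = proj X C (Suc i) y"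
proof -
  let ?n = "Suc (Suc i)" and ?\<pi> = "proj X C (Suc i)"
  obtain c c' where c: "c \<in> C ?n" "c' \<in> C ?n"
    and agree: "\<forall>v\<in>vert ?n. v \<noteq> top_vert ?n \<longrightarrow> c v = c' v"
    and top: "c (top_vert ?n) = x" "c' (top_vert ?n) = y" and xy: "x \<in> X" "y \<in> X"
    using R unfolding char_rel_def by blast
  obtain z where z: "z \<in> Z" "act z (?\<pi> x) = ?\<pi> y"
    using structure_group_orbit_iff[OF S xy] E by auto
  define g where "g = (\<lambda>v\<in>vert ?n. if v = top_vert ?n then z else 0)"
  have Z0: "0 \<in> Z"
    using S compact_metric_group_subgroup structure_group_compact_metric_group
    unfolding is_subgroup_add_def by blast
  then have g: "g \<in> vert ?n \<rightarrow>\<^sub>E Z"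
    using z(1) unfolding g_def by auto
  have "act (g v) (?\<pi> (c v)) = ?\<pi> (c' v)" if v: "v \<in> vert ?n" for v
  proof (cases "v = top_vert ?n")
    case False
    have "c v \<in> X" using nilspace_cube_PiE[OF N c(1)] v by auto
    then show ?thesis
      using False v agree structure_group_act_0[OF S proj_in_factor] unfolding g_def by simp
  qed (use z top in \<open>simp add: g_def\<close>)
  then have "(\<lambda>v\<in>vert ?n. act (g v) (?\<pi> (c v))) = (\<lambda>v\<in>vert ?n. ?\<pi> (c' v))"
    by (rule restrict_ext)
  moreover have "(\<lambda>v\<in>vert ?n. ?\<pi> (c' v)) \<in> factor_cubes X C (Suc i) ?n"
    unfolding factor_cubes_def using c(2) by blast
  ultimately have "g \<in> D_cubes Z (Suc i) ?n"
    using structure_group_act_cube_iff[OF S c(1) g] by simp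
  then have "z = 0"
    unfolding g_def by (rule D_cubes_top_delta_eq_0)
  then show ?thesis
    using z(2) structure_group_act_0[OF S proj_in_factor[OF xy(1)]] by simp
qed

lemma char_rel_imp_proj_eq:
  assumes N: "nilspace X C"
    and S: "\<forall>j\<in>{1..i}. structure_group X C j (Z j) (dZ j) (act j)"
    and R: "char_rel X C i x y"
  shows "proj X C i x = proj X C i y"
  using S R
proof (induction i arbitrary: x y)
  case 0
  then show ?case
    using proj_0[OF N] unfolding char_rel_def by simp
next
  case (Suc i)
  have "proj X C i x = proj X C i y"
    using Suc.IH Suc.prems char_rel_Suc_imp_char_rel[OF N] by simp
  moreover have "structure_group X C (Suc i) (Z (Suc i)) (dZ (Suc i)) (act (Suc i))"
    using Suc.prems(1) by simp
  ultimately show ?case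
    using structure_group_char_rel_imp_proj_eq[OF N _ Suc.prems(2)] by blast
qed

lemma proj_eq_iff_char_rel:
  assumes N: "nilspace X C"
    and S: "\<forall>j\<in>{1..i}. structure_group X C j (Z j) (dZ j) (act j)"
    and "x \<in> X" "y \<in> X"
  shows "proj X C i x = proj X C i y \<longleftrightarrow> char_rel X C i x y"
proof
  assume "proj X C i x = proj X C i y"
  then show "char_rel X C i x y"
    using char_rel_refl[OF N \<open>y \<in> X\<close>] unfolding proj_def by blast
qed (rule char_rel_imp_proj_eq[OF N S])

section \<open>General topology\<close>

lemma openin_quotient_top:
  "openin (quotient_top T f) U \<longleftrightarrow> U \<subseteq> f ` topspace T \<and> openin T {x \<in> topspace T. f x \<in> U}"
proof -
  have "istopology (\<lambda>U. U \<subseteq> f ` topspace T \<and> openin T {x \<in> topspace T. f x \<in> U})"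
    unfolding istopology_def
  proof (intro conjI; intro allI impI)
    fix U V
    assume "U \<subseteq> f ` topspace T \<and> openin T {x \<in> topspace T. f x \<in> U}"
      and "V \<subseteq> f ` topspace T \<and> openin T {x \<in> topspace T. f x \<in> V}"
    moreover have "{x \<in> topspace T. f x \<in> U \<inter> V} =
        {x \<in> topspace T. f x \<in> U} \<inter> {x \<in> topspace T. f x \<in> V}" by blast
    ultimately show "U \<inter> V \<subseteq> f ` topspace T \<and> openin T {x \<in> topspace T. f x \<in> U \<inter> V}"
      by auto
  next
    fix K assume K: "\<forall>U\<in>K. U \<subseteq> f ` topspace T \<and> openin T {x \<in> topspace T. f x \<in> U}"
    have "{x \<in> topspace T. f x \<in> \<Union>K} = (\<Union>U\<in>K. {x \<in> topspace T. f x \<in> U})" by blast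
    then show "\<Union>K \<subseteq> f ` topspace T \<and> openin T {x \<in> topspace T. f x \<in> \<Union>K}"
      using K by auto
  qed
  then show ?thesis
    unfolding quotient_top_def by simp
qed

lemma topspace_quotient_top: "topspace (quotient_top T f) = f ` topspace T"
proof (rule antisym)
  have "{x \<in> topspace T. f x \<in> f ` topspace T} = topspace T" by blast
  then have "openin (quotient_top T f) (f ` topspace T)"
    by (simp add: openin_quotient_top)
  then show "f ` topspace T \<subseteq> topspace (quotient_top T f)"
    by (rule openin_subset)
qed (unfold topspace_def openin_quotient_top, blast)

lemma closedin_quotient_top:
  "closedin (quotient_top T f) S \<longleftrightarrow> S \<subseteq> f ` topspace T \<and> closedin T {x \<in> topspace T. f x \<in> S}"
proof -
  have "{x \<in> topspace T. f x \<in> f ` topspace T - S} = topspace T - {x \<in> topspace T. f x \<in> S}"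
    by blast
  then show ?thesis
    unfolding closedin_def topspace_quotient_top openin_quotient_top by auto
qed

lemma continuous_map_quotient_top: "continuous_map T (quotient_top T f) f"
  unfolding continuous_map_def topspace_quotient_top openin_quotient_top by auto

lemma closed_map_quotient_top:
  assumes H: "Hausdorff_space T"
    and R: "compactin (prod_topology T T) {(x, y) \<in> topspace T \<times> topspace T. f x = f y}"
  shows "closed_map T (quotient_top T f) f"
  unfolding closed_map_def closedin_quotient_top
proof (intro allI impI conjI)
  fix U assume U: "closedin T U"
  then show "f ` U \<subseteq> f ` topspace T"
    using closedin_subset by blast
  let ?R = "{(x, y) \<in> topspace T \<times> topspace T. f x = f y}"
  have "closedin (prod_topology T T) (U \<times> topspace T)"
    using U by (simp add: closedin_prod_Times_iff)
  then have "compactin (prod_topology T T) (?R \<inter> (U \<times> topspace T))"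
    by (rule compact_Int_closedin[OF R])
  then have "compactin T (snd ` (?R \<inter> (U \<times> topspace T)))"
    using image_compactin continuous_map_snd by blast
  moreover have "snd ` (?R \<inter> (U \<times> topspace T)) = {x \<in> topspace T. f x \<in> f ` U}"
  proof (intro equalityI subsetI)
    fix x assume "x \<in> {x \<in> topspace T. f x \<in> f ` U}"
    then obtain u where "u \<in> U" "x \<in> topspace T" "f u = f x" by auto
    then have "(u, x) \<in> ?R \<inter> (U \<times> topspace T)"
      using closedin_subset[OF U] by auto
    then show "x \<in> snd ` (?R \<inter> (U \<times> topspace T))" by force
  qed (force intro: rev_image_eqI)
  ultimately show "closedin T {x \<in> topspace T. f x \<in> f ` U}"
    using compactin_imp_closedin[OF H] by metis
qed

lemma Hausdorff_space_quotient_top: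
  assumes "compact_space T" "Hausdorff_space T"
    and "compactin (prod_topology T T) {(x, y) \<in> topspace T \<times> topspace T. f x = f y}"
  shows "Hausdorff_space (quotient_top T f)"
proof (rule normal_Hausdorff_space_closed_continuous_map_image[THEN conjunct2])
  show "normal_space T"
    using assms(1,2) compact_Hausdorff_or_regular_imp_normal_space by blast
qed (use assms in \<open>simp_all add: closed_map_quotient_top continuous_map_quotient_top
                                 topspace_quotient_top\<close>)

lemma restrict_eq_restrict_iff: "restrict f A = restrict g A \<longleftrightarrow> (\<forall>x\<in>A. f x = g x)"
proof (intro iffI ballI)
  fix x assume eq: "restrict f A = restrict g A" and x: "x \<in> A"
  show "f x = g x"
    using fun_cong[OF eq, of x] x by simp
qed (rule restrict_ext, simp)

lemma closedin_pairs_agreeing_on: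
  assumes H: "Hausdorff_space Y" and J: "J \<subseteq> I"
  shows "closedin (prod_topology (product_topology (\<lambda>_. Y) I) (product_topology (\<lambda>_. Y) I))
           {(c, c') \<in> topspace (product_topology (\<lambda>_. Y) I) \<times> topspace (product_topology (\<lambda>_. Y) I).
              \<forall>v\<in>J. c v = c' v}"
proof -
  let ?P = "product_topology (\<lambda>_. Y) I"
  have "continuous_map (prod_topology ?P ?P) Y (\<lambda>p. fst p v)"
    "continuous_map (prod_topology ?P ?P) Y (\<lambda>p. snd p v)" if "v \<in> I" for v
    using continuous_map_compose[OF continuous_map_fst continuous_map_product_projection[OF that]]
      continuous_map_compose[OF continuous_map_snd continuous_map_product_projection[OF that]]
    unfolding o_def by auto
  then have restr: "continuous_map (prod_topology ?P ?P) (product_topology (\<lambda>_. Y) J) (\<lambda>p. restrict (fst p) J)"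
    "continuous_map (prod_topology ?P ?P) (product_topology (\<lambda>_. Y) J) (\<lambda>p. restrict (snd p) J)"
    unfolding continuous_map_componentwise using J by auto
  have "Hausdorff_space (product_topology (\<lambda>_. Y) J)"
    using H Hausdorff_space_product_topology by blast
  then have "closedin (prod_topology ?P ?P)
      {p \<in> topspace (prod_topology ?P ?P). restrict (fst p) J = restrict (snd p) J}"
    using closedin_continuous_maps_eq[OF _ restr] by simp
  moreover have "{p \<in> topspace (prod_topology ?P ?P). restrict (fst p) J = restrict (snd p) J}
      = {(c, c') \<in> topspace ?P \<times> topspace ?P. \<forall>v\<in>J. c v = c' v}"
  proof (intro set_eqI)
    fix p
    show "p \<in> {p \<in> topspace (prod_topology ?P ?P). restrict (fst p) J = restrict (snd p) J} \<longleftrightarrow>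
        p \<in> {(c, c') \<in> topspace ?P \<times> topspace ?P. \<forall>v\<in>J. c v = c' v}"
      by (cases p) (simp only: restrict_eq_restrict_iff topspace_prod_topology mem_Collect_eq
          case_prod_conv fst_conv snd_conv)
  qed
  ultimately show ?thesis by simp
qed

lemma homeomorphic_map_inv_into:
  assumes "homeomorphic_map X Y f"
  shows "homeomorphic_map Y X (inv_into (topspace X) f)"
proof -
  obtain g where g: "homeomorphic_maps X Y f g"
    using assms homeomorphic_map_maps by blast
  have "g y = inv_into (topspace X) f y" if "y \<in> topspace Y" for y
  proof -
    have "g y \<in> topspace X" "f (g y) = y"
      using g that unfolding homeomorphic_maps_def continuous_map_def by auto
    then show ?thesis
      using inv_into_f_eq[OF homeomorphic_imp_injective_map[OF assms]] by simp
  qed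
  moreover have "homeomorphic_map Y X g"
    using g homeomorphic_maps_map by blast
  ultimately show ?thesis
    using homeomorphic_map_eq by blast
qed

lemma eventually_at_right_0_imp_ex_pos:
  "\<forall>\<^sub>F \<delta> in at_right 0. P \<delta> \<Longrightarrow> \<exists>\<delta>>0. P (\<delta>::real)"
  using eventually_happens'[OF trivial_limit_at_right_real eventually_conj[OF eventually_at_right_less]]
  by blast

lemma compactin_uniform_threshold:
  assumes Q: "compactin T Q"
    and f: "continuous_map T euclideanreal f" and g: "continuous_map T euclideanreal g"
    and zero: "\<And>q. q \<in> Q \<Longrightarrow> f q \<le> 0 \<Longrightarrow> g q < \<epsilon>"
  shows "\<forall>\<^sub>F \<delta> in at_right 0. \<forall>q\<in>Q. f q < \<delta> \<longrightarrow> g q < \<epsilon>"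
proof -
  define B where "B = Q \<inter> {q \<in> topspace T. g q \<in> {\<epsilon>..}}"
  have "\<exists>m>0. \<forall>q\<in>B. m \<le> f q"
  proof (cases "B = {}")
    case False
    have "closedin T {q \<in> topspace T. g q \<in> {\<epsilon>..}}"
      using g by (rule closedin_continuous_map_preimage) simp
    then have "compact (f ` B)"
      unfolding B_def using image_compactin[OF compact_Int_closedin[OF Q] f] by simp
    then obtain m where m: "m \<in> f ` B" "\<forall>t\<in>f ` B. m \<le> t"
      using compact_attains_inf False by blast
    have "m > 0"
      using m(1) zero unfolding B_def by force
    then show ?thesis
      using m(2) by blast
  qed (auto intro: exI[of _ 1])
  then obtain m where "m > 0" and m: "\<forall>q\<in>B. m \<le> f q" by blast
  show ?thesis
    unfolding eventually_at_right_field
  proof (intro exI[of _ m] conjI allI impI ballI)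
    fix \<delta> q assume "\<delta> < m" "q \<in> Q" "f q < \<delta>"
    then show "g q < \<epsilon>"
      using m compactin_subset_topspace[OF Q] unfolding B_def by force
  qed (rule \<open>m > 0\<close>)
qed

lemma topspace_factor_top: "topspace (factor_top X C i) = factor X C i"
  by (simp add: factor_top_def factor_def topspace_quotient_top)

lemma continuous_map_proj: "continuous_map (top_of_set X) (factor_top X C i) (proj X C i)"
  unfolding factor_top_def by (rule continuous_map_quotient_top)

lemma compactin_top_vertex_pairs:
  fixes X :: "'a::metric_space set"
  assumes K: "compact X" and Q: "closedin (product_topology (\<lambda>_. top_of_set X) (vert n)) Q"
  shows "compactin (prod_topology (top_of_set X) (top_of_set X))
    ((\<lambda>(c, c'). (c (top_vert n), c' (top_vert n))) `
       {(c, c') \<in> Q \<times> Q. \<forall>v\<in>vert n. v \<noteq> top_vert n \<longrightarrow> c v = c' v})"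
proof -
  let ?P = "product_topology (\<lambda>_. top_of_set X) (vert n)"
  have "compact_space ?P"
    using K by (simp add: compact_space_product_topology compact_space_subtopology)
  then have "compactin (prod_topology ?P ?P) (Q \<times> Q)"
    using Q closedin_compact_space compactin_Times by blast
  moreover have "closedin (prod_topology ?P ?P) {(c, c') \<in> topspace ?P \<times> topspace ?P.
      \<forall>v\<in>vert n - {top_vert n}. c v = c' v}"
    by (rule closedin_pairs_agreeing_on) (auto simp: Hausdorff_space_subtopology)
  ultimately have "compactin (prod_topology ?P ?P) ((Q \<times> Q) \<inter> {(c, c') \<in> topspace ?P \<times> topspace ?P.
      \<forall>v\<in>vert n - {top_vert n}. c v = c' v})"
    by (rule compact_Int_closedin)
  also have "(Q \<times> Q) \<inter> {(c, c') \<in> topspace ?P \<times> topspace ?P. \<forall>v\<in>vert n - {top_vert n}. c v = c' v}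
      = {(c, c') \<in> Q \<times> Q. \<forall>v\<in>vert n. v \<noteq> top_vert n \<longrightarrow> c v = c' v}"
  proof (intro set_eqI)
    fix p
    have "c \<in> topspace ?P" if "c \<in> Q" for c
      using closedin_subset[OF Q] that by blast
    then show "p \<in> (Q \<times> Q) \<inter> {(c, c') \<in> topspace ?P \<times> topspace ?P. \<forall>v\<in>vert n - {top_vert n}. c v = c' v}
        \<longleftrightarrow> p \<in> {(c, c') \<in> Q \<times> Q. \<forall>v\<in>vert n. v \<noteq> top_vert n \<longrightarrow> c v = c' v}"
      by (cases p) auto
  qed
  finally have "compactin (prod_topology ?P ?P)
      {(c, c') \<in> Q \<times> Q. \<forall>v\<in>vert n. v \<noteq> top_vert n \<longrightarrow> c v = c' v}" .
  moreover have "continuous_map (prod_topology ?P ?P) (prod_topology (top_of_set X) (top_of_set X))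
      (\<lambda>(c, c'). (c (top_vert n), c' (top_vert n)))"
  proof -
    have top: "continuous_map ?P (top_of_set X) (\<lambda>c. c (top_vert n))"
      by (rule continuous_map_product_projection) simp
    show ?thesis
      unfolding case_prod_beta
      using continuous_map_compose[OF continuous_map_fst top] continuous_map_compose[OF continuous_map_snd top]
      by (intro continuous_map_pairedI) (simp_all add: o_def)
  qed
  ultimately show ?thesis
    by (rule image_compactin)
qed

lemma compactin_char_rel:
  assumes "compact_nilspace X C"
  shows "compactin (prod_topology (top_of_set X) (top_of_set X)) {(x, y). char_rel X C i x y}"
proof -
  have N: "nilspace X C" and K: "compact X"
    and Q: "closedin (product_topology (\<lambda>_. top_of_set X) (vert (Suc i))) (C (Suc i))"
    using assms unfolding compact_nilspace_def by auto
  define tops :: "((nat \<Rightarrow> bool) \<Rightarrow> 'a) \<times> ((nat \<Rightarrow> bool) \<Rightarrow> 'a) \<Rightarrow> 'a \<times> 'a"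
    where "tops = (\<lambda>(c, c'). (c (top_vert (Suc i)), c' (top_vert (Suc i))))"
  define agree where "agree = {(c, c') \<in> C (Suc i) \<times> C (Suc i).
      \<forall>v\<in>vert (Suc i). v \<noteq> top_vert (Suc i) \<longrightarrow> c v = c' v}"
  have "(x, y) \<in> tops ` agree \<longleftrightarrow> char_rel X C i x y" for x y
  proof
    assume "(x, y) \<in> tops ` agree"
    then obtain c c' where c: "c \<in> C (Suc i)" "c' \<in> C (Suc i)"
      and "\<forall>v\<in>vert (Suc i). v \<noteq> top_vert (Suc i) \<longrightarrow> c v = c' v"
      and "x = c (top_vert (Suc i))" "y = c' (top_vert (Suc i))"
      unfolding tops_def agree_def by auto
    moreover have "x \<in> X" "y \<in> X"
      using nilspace_cube_PiE[OF N c(1)] nilspace_cube_PiE[OF N c(2)] calculation by auto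
    ultimately show "char_rel X C i x y"
      unfolding char_rel_def by blast
  next
    assume "char_rel X C i x y"
    then obtain c c' where "c \<in> C (Suc i)" "c' \<in> C (Suc i)"
      "\<forall>v\<in>vert (Suc i). v \<noteq> top_vert (Suc i) \<longrightarrow> c v = c' v"
      and "x = c (top_vert (Suc i))" "y = c' (top_vert (Suc i))"
      unfolding char_rel_def by blast
    then show "(x, y) \<in> tops ` agree"
      unfolding tops_def agree_def by (intro image_eqI[where x = "(c, c')"]) auto
  qed
  then have "{(x, y). char_rel X C i x y} = tops ` agree"
    by auto
  then show ?thesis
    using compactin_top_vertex_pairs[OF K Q] unfolding tops_def agree_def by simp
qed

lemma Hausdorff_space_factor_top:
  assumes "compact_nilspace X C"
    and S: "\<forall>j\<in>{1..i}. structure_group X C j (Z j) (dZ j) (act j)"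
  shows "Hausdorff_space (factor_top X C i)"
  unfolding factor_top_def
proof (rule Hausdorff_space_quotient_top)
  have N: "nilspace X C" and K: "compact X"
    using assms(1) unfolding compact_nilspace_def by auto
  show "compact_space (top_of_set X)" "Hausdorff_space (top_of_set X)"
    using K by (simp_all add: compact_space_subtopology Hausdorff_space_subtopology)
  have "(x, y) \<in> X \<times> X \<and> proj X C i x = proj X C i y \<longleftrightarrow> char_rel X C i x y" for x y
    using proj_eq_iff_char_rel[OF N S, of x y] char_rel_in[of X C i x y] by auto
  then have "{(x, y) \<in> topspace (top_of_set X) \<times> topspace (top_of_set X). proj X C i x = proj X C i y}
      = {(x, y). char_rel X C i x y}"
    by auto
  then show "compactin (prod_topology (top_of_set X) (top_of_set X))
      {(x, y) \<in> topspace (top_of_set X) \<times> topspace (top_of_set X). proj X C i x = proj X C i y}"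
    using compactin_char_rel[OF assms(1)] by simp
qed

section \<open>Charts of the fibres\<close>

definition orbit_chart :: "'z set \<Rightarrow> ('z \<Rightarrow> 'b \<Rightarrow> 'b) \<Rightarrow> 'b \<Rightarrow> 'b \<Rightarrow> 'z" where
  "orbit_chart Z act A = inv_into Z (\<lambda>z. act z A)"

lemma fiber_subset_factor: "fiber X C i y \<subseteq> factor X C i"
  unfolding fiber_def factor_def by blast

lemma fiber_nonempty: "y \<in> factor X C (i - 1) \<Longrightarrow> fiber X C i y \<noteq> {}"
  unfolding factor_def fiber_def by blast

lemma fiber_eq_orbit:
  assumes S: "structure_group X C i Z dZ act" and A: "A \<in> fiber X C i y"
  shows "fiber X C i y = (\<lambda>z. act z A) ` Z"
proof -
  obtain a where a: "a \<in> X" "proj X C (i - 1) a = y" "A = proj X C i a"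
    using A unfolding fiber_def by blast
  show ?thesis
  proof (intro equalityI subsetI)
    fix B assume "B \<in> fiber X C i y"
    then obtain b where b: "b \<in> X" "proj X C (i - 1) b = y" "B = proj X C i b"
      unfolding fiber_def by blast
    then obtain z where "z \<in> Z" "act z A = B"
      using structure_group_orbit_iff[OF S a(1) b(1)] a by auto
    then show "B \<in> (\<lambda>z. act z A) ` Z" by blast
  next
    fix B assume "B \<in> (\<lambda>z. act z A) ` Z"
    then obtain z where z: "z \<in> Z" "B = act z A" by blast
    then have "B \<in> factor X C i"
      using structure_group_act_in_factor[OF S z(1) proj_in_factor[OF a(1)]] a(3) by simp
    then obtain b where b: "b \<in> X" "B = proj X C i b"
      unfolding factor_def by blast
    then have "proj X C (i - 1) b = y"
      using structure_group_orbit_iff[OF S a(1) b(1)] z a by auto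
    then show "B \<in> fiber X C i y"
      using b unfolding fiber_def by blast
  qed
qed

lemma orbit_chart_act:
  assumes "structure_group X C i Z dZ act" "A \<in> factor X C i" "z \<in> Z"
  shows "orbit_chart Z act A (act z A) = z"
  unfolding orbit_chart_def using structure_group_act_inj_on[OF assms(1,2)] assms(3)
  by (rule inv_into_f_f)

lemma continuous_map_orbit:
  assumes S: "structure_group X C i Z dZ act" and A: "A \<in> factor X C i"
  shows "continuous_map (Metric_space.mtopology Z dZ) (factor_top X C i) (\<lambda>z. act z A)"
proof -
  have "continuous_map (Metric_space.mtopology Z dZ) (factor_top X C i) (\<lambda>z. A)"
    using A by (simp add: topspace_factor_top)
  then have "continuous_map (Metric_space.mtopology Z dZ)
      (prod_topology (Metric_space.mtopology Z dZ) (factor_top X C i)) (\<lambda>z. (z, A))"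
    by (intro continuous_map_pairedI) simp_all
  from continuous_map_compose[OF this structure_group_continuous_act[OF S]]
  show ?thesis
    by (simp add: o_def)
qed

lemma homeomorphic_map_orbit_chart:
  assumes S: "structure_group X C i Z dZ act"
    and H: "Hausdorff_space (factor_top X C i)" and A: "A \<in> fiber X C i y"
  shows "homeomorphic_map (subtopology (factor_top X C i) (fiber X C i y))
           (Metric_space.mtopology Z dZ) (orbit_chart Z act A)"
proof -
  let ?ZT = "Metric_space.mtopology Z dZ" and ?F = "subtopology (factor_top X C i) (fiber X C i y)"
  have G: "compact_metric_group Z dZ"
    using S by (rule structure_group_compact_metric_group)
  have tZ: "topspace ?ZT = Z"
    using Metric_space.topspace_mtopology[OF compact_metric_group_Metric_space[OF G]] .
  have orbit: "fiber X C i y = (\<lambda>z. act z A) ` Z"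
    using S A by (rule fiber_eq_orbit)
  have AF: "A \<in> factor X C i"
    using A fiber_subset_factor by blast
  have tF: "topspace ?F = fiber X C i y"
    using fiber_subset_factor[of X C i y] by (auto simp: topspace_factor_top)
  have "continuous_map ?ZT ?F (\<lambda>z. act z A)"
    unfolding continuous_map_in_subtopology
    using continuous_map_orbit[OF S AF] orbit tZ by blast
  moreover have "compact_space ?ZT"
    using G by (rule compact_metric_group_compact_space)
  moreover have "Hausdorff_space ?F"
    using H by (rule Hausdorff_space_subtopology)
  moreover have "(\<lambda>z. act z A) ` topspace ?ZT = topspace ?F"
    using tZ tF orbit by simp
  moreover have "inj_on (\<lambda>z. act z A) (topspace ?ZT)"
    using tZ structure_group_act_inj_on[OF S AF] by simp
  ultimately have "homeomorphic_map ?ZT ?F (\<lambda>z. act z A)"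
    by (rule continuous_imp_homeomorphic_map)
  from homeomorphic_map_inv_into[OF this]
  show ?thesis
    unfolding orbit_chart_def tZ .
qed

lemma fiber_iso_orbit_chart:
  assumes N: "nilspace X C" and S: "structure_group X C i Z dZ act"
    and H: "Hausdorff_space (factor_top X C i)" and A: "A \<in> fiber X C i y"
  shows "fiber_iso X C i y Z dZ (orbit_chart Z act A)"
  unfolding fiber_iso_def
proof (intro conjI allI ballI)
  show "homeomorphic_map (subtopology (factor_top X C i) (fiber X C i y))
      (Metric_space.mtopology Z dZ) (orbit_chart Z act A)"
    using S H A by (rule homeomorphic_map_orbit_chart)
next
  fix n and c assume c: "c \<in> vert n \<rightarrow>\<^sub>E fiber X C i y"
  obtain a where a: "a \<in> X" "A = proj X C i a"
    using A unfolding fiber_def by blast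
  have orbit: "fiber X C i y = (\<lambda>z. act z A) ` Z"
    using S A by (rule fiber_eq_orbit)
  define g where "g = (\<lambda>v\<in>vert n. orbit_chart Z act A (c v))"
  have "orbit_chart Z act A (c v) \<in> Z" if "v \<in> vert n" for v
    using c that orbit unfolding orbit_chart_def by (metis PiE_mem inv_into_into)
  then have gZ: "g \<in> vert n \<rightarrow>\<^sub>E Z"
    unfolding g_def by (simp add: restrict_PiE_iff)
  have eq: "(\<lambda>v\<in>vert n. act (g v) (proj X C i ((\<lambda>v\<in>vert n. a) v))) = c"
  proof
    fix v
    show "(\<lambda>v\<in>vert n. act (g v) (proj X C i ((\<lambda>v\<in>vert n. a) v))) v = c v"
    proof (cases "v \<in> vert n")
      case True
      then have "c v \<in> (\<lambda>z. act z A) ` Z"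
        using c orbit by auto
      then have "act (orbit_chart Z act A (c v)) A = c v"
        unfolding orbit_chart_def by (rule f_inv_into_f)
      then show ?thesis
        using True a(2) by (simp add: g_def)
    qed (simp add: PiE_arb[OF c])
  qed
  have "c \<in> fiber_cubes X C i y n \<longleftrightarrow> c \<in> factor_cubes X C i n"
    using c unfolding fiber_cubes_def by (simp add: PiE_iff)
  also have "\<dots> \<longleftrightarrow> g \<in> D_cubes Z i n"
    using structure_group_act_cube_iff[OF S nilspace_const_cube[OF N a(1)] gZ] unfolding eq .
  finally show "c \<in> fiber_cubes X C i y n \<longleftrightarrow> (\<lambda>v\<in>vert n. orbit_chart Z act A (c v)) \<in> D_cubes Z i n"
    unfolding g_def .
qed

section \<open>Uniform continuity of the charts\<close>

lemma compact_metric_group_continuous_translation_dist: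
  assumes G: "compact_metric_group Z dZ"
  shows "continuous_map (prod_topology (Metric_space.mtopology Z dZ) (Metric_space.mtopology Z dZ))
           euclideanreal (\<lambda>(z, w). dZ (z + w) w)"
proof -
  define m where "m = metric (Z, dZ)"
  have M: "Metric_space Z dZ"
    using G by (rule compact_metric_group_Metric_space)
  have mt: "mtopology_of m = Metric_space.mtopology Z dZ" and md: "mdist m = dZ"
    unfolding m_def using Metric_space.mtopology_of[OF M] Metric_space.mdist_metric[OF M] by auto
  have "continuous_map (prod_topology (mtopology_of m) (mtopology_of m)) (mtopology_of m)
      (\<lambda>p. fst p + snd p)"
    using compact_metric_group_continuous_add[OF G] unfolding mt by (simp add: case_prod_beta')
  from continuous_map_mdist[OF this continuous_map_snd]
  show ?thesis
    unfolding mt md by (simp add: case_prod_beta')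
qed

lemma closedin_orbit_relation:
  assumes S: "structure_group X C i Z dZ act" and H: "Hausdorff_space (factor_top X C i)"
  shows "closedin (prod_topology (prod_topology (top_of_set X) (top_of_set X))
                     (prod_topology (Metric_space.mtopology Z dZ) (Metric_space.mtopology Z dZ)))
           {((a, b), (z, w)) \<in> (X \<times> X) \<times> (Z \<times> Z). act z (proj X C i b) = proj X C i a}"
proof -
  let ?XT = "top_of_set X" and ?ZT = "Metric_space.mtopology Z dZ" and ?\<pi> = "proj X C i"
  let ?T = "prod_topology (prod_topology ?XT ?XT) (prod_topology ?ZT ?ZT)"
  have tZ: "topspace ?ZT = Z"
    using Metric_space.topspace_mtopology[OF compact_metric_group_Metric_space
        [OF structure_group_compact_metric_group[OF S]]] .
  have "continuous_map ?T (prod_topology ?ZT (factor_top X C i)) (\<lambda>q. (fst (snd q), ?\<pi> (snd (fst q))))"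
    by (intro continuous_map_pairedI continuous_map_compose[unfolded o_def, OF continuous_map_snd continuous_map_fst]
        continuous_map_compose[unfolded o_def, OF continuous_map_fst continuous_map_snd]
        continuous_map_compose[unfolded o_def, OF _ continuous_map_proj])
  from continuous_map_compose[OF this structure_group_continuous_act[OF S]]
  have "continuous_map ?T (factor_top X C i) (\<lambda>q. act (fst (snd q)) (?\<pi> (snd (fst q))))"
    by (simp add: o_def)
  moreover have "continuous_map ?T (factor_top X C i) (\<lambda>q. ?\<pi> (fst (fst q)))"
    by (intro continuous_map_compose[unfolded o_def, OF _ continuous_map_proj]
        continuous_map_compose[unfolded o_def, OF continuous_map_fst continuous_map_fst])
  ultimately have "closedin ?T {q \<in> topspace ?T. act (fst (snd q)) (?\<pi> (snd (fst q))) = ?\<pi> (fst (fst q))}"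
    using H by (intro closedin_continuous_maps_eq)
  moreover have "{q \<in> topspace ?T. act (fst (snd q)) (?\<pi> (snd (fst q))) = ?\<pi> (fst (fst q))}
      = {((a, b), (z, w)) \<in> (X \<times> X) \<times> (Z \<times> Z). act z (?\<pi> b) = ?\<pi> a}"
    using tZ by auto
  ultimately show ?thesis by simp
qed

text \<open>On the compact set of ((a, b), (z, w)) with z moving b to a in Y_i, the distance
  d(a, b) vanishes only where z = 0 (by freeness), and there translation by z moves w by 0.\<close>
lemma structure_group_uniform_translation:
  fixes X :: "'a::metric_space set"
  assumes K: "compact X" and S: "structure_group X C i Z dZ act"
    and H: "Hausdorff_space (factor_top X C i)" and \<epsilon>: "\<epsilon> > 0"
  shows "\<forall>\<^sub>F \<delta> in at_right 0. \<forall>a\<in>X. \<forall>b\<in>X. \<forall>z\<in>Z. \<forall>w\<in>Z.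
           act z (proj X C i b) = proj X C i a \<longrightarrow> dist a b < \<delta> \<longrightarrow> dZ (z + w) w < \<epsilon>"
proof -
  let ?XT = "top_of_set X" and ?ZT = "Metric_space.mtopology Z dZ"
  let ?T = "prod_topology (prod_topology ?XT ?XT) (prod_topology ?ZT ?ZT)"
  define E where "E = {((a, b), (z, w)) \<in> (X \<times> X) \<times> (Z \<times> Z). act z (proj X C i b) = proj X C i a}"
  have G: "compact_metric_group Z dZ"
    using S by (rule structure_group_compact_metric_group)
  have "compact_space ?T"
    using K compact_metric_group_compact_space[OF G]
    by (simp add: compact_space_prod_topology compact_space_subtopology del: prod_topology_subtopology_eu)
  then have E: "compactin ?T E"
    using closedin_orbit_relation[OF S H] unfolding E_def by (rule closedin_compact_space)
  have "continuous_map (prod_topology ?XT ?XT) euclideanreal (\<lambda>(a, b). dist a b)"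
    by (simp add: case_prod_beta continuous_on_dist continuous_on_fst continuous_on_snd)
  from continuous_map_compose[OF continuous_map_fst this]
  have f: "continuous_map ?T euclideanreal (\<lambda>q. dist (fst (fst q)) (snd (fst q)))"
    by (simp add: o_def case_prod_beta)
  from continuous_map_compose[OF continuous_map_snd compact_metric_group_continuous_translation_dist[OF G]]
  have g: "continuous_map ?T euclideanreal (\<lambda>q. dZ (fst (snd q) + snd (snd q)) (snd (snd q)))"
    by (simp add: o_def case_prod_beta)
  have zero: "dZ (fst (snd q) + snd (snd q)) (snd (snd q)) < \<epsilon>"
    if "q \<in> E" "dist (fst (fst q)) (snd (fst q)) \<le> 0" for q
  proof -
    have "fst (fst q) \<in> X" "fst (snd q) \<in> Z" "snd (snd q) \<in> Z"
      and "act (fst (snd q)) (proj X C i (fst (fst q))) = proj X C i (fst (fst q))"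
      using that unfolding E_def by auto
    then have "fst (snd q) = 0"
      using structure_group_act_free[OF S _ proj_in_factor] by blast
    then show ?thesis
      using \<open>snd (snd q) \<in> Z\<close> Metric_space.mdist_zero[OF compact_metric_group_Metric_space[OF G]] \<epsilon>
      by simp
  qed
  from compactin_uniform_threshold[OF E f g zero]
  show ?thesis
    by (rule eventually_mono) (auto simp: E_def)
qed

lemma orbit_chart_uniform:
  fixes X :: "'a::metric_space set"
  assumes K: "compact X" and S: "structure_group X C i Z dZ act"
    and H: "Hausdorff_space (factor_top X C i)" and \<epsilon>: "\<epsilon> > 0"
    and base: "\<And>y. y \<in> factor X C (i - 1) \<Longrightarrow> base y \<in> fiber X C i y"
  shows "\<forall>\<^sub>F \<delta> in at_right 0. \<forall>y\<in>factor X C (i - 1). \<forall>a\<in>X. \<forall>b\<in>X.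
           proj X C (i - 1) a = y \<longrightarrow> proj X C (i - 1) b = y \<longrightarrow> dist a b < \<delta> \<longrightarrow>
           dZ (orbit_chart Z act (base y) (proj X C i a)) (orbit_chart Z act (base y) (proj X C i b)) < \<epsilon>"
  using structure_group_uniform_translation[OF K S H \<epsilon>]
proof (rule eventually_mono, intro ballI impI)
  fix \<delta> y a b
  assume \<delta>: "\<forall>a\<in>X. \<forall>b\<in>X. \<forall>z\<in>Z. \<forall>w\<in>Z.
      act z (proj X C i b) = proj X C i a \<longrightarrow> dist a b < \<delta> \<longrightarrow> dZ (z + w) w < \<epsilon>"
    and "y \<in> factor X C (i - 1)" and ab: "a \<in> X" "b \<in> X"
    and y: "proj X C (i - 1) a = y" "proj X C (i - 1) b = y" and "dist a b < \<delta>"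
  define A where "A = base y"
  have A: "A \<in> fiber X C i y"
    unfolding A_def using base \<open>y \<in> factor X C (i - 1)\<close> .
  have AF: "A \<in> factor X C i"
    using A fiber_subset_factor by blast
  have "proj X C i b \<in> (\<lambda>z. act z A) ` Z"
    using fiber_eq_orbit[OF S A] ab(2) y(2) unfolding fiber_def by blast
  then obtain w where w: "w \<in> Z" "proj X C i b = act w A" by blast
  obtain z where z: "z \<in> Z" "act z (proj X C i b) = proj X C i a"
    using structure_group_orbit_iff[OF S ab(2,1)] y by auto
  have "z + w \<in> Z"
    using z(1) w(1) compact_metric_group_subgroup[OF structure_group_compact_metric_group[OF S]]
    unfolding is_subgroup_add_def by blast
  moreover have "proj X C i a = act (z + w) A"
    using structure_group_act_add[OF S z(1) w(1) AF] z(2) w(2) by simp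
  ultimately have "orbit_chart Z act A (proj X C i a) = z + w"
    using orbit_chart_act[OF S AF] by simp
  moreover have "orbit_chart Z act A (proj X C i b) = w"
    using orbit_chart_act[OF S AF w(1)] w(2) by simp
  ultimately show "dZ (orbit_chart Z act (base y) (proj X C i a)) (orbit_chart Z act (base y) (proj X C i b)) < \<epsilon>"
    using \<delta> ab z w \<open>dist a b < \<delta>\<close> unfolding A_def by simp
qed

theorem mainTheorem8:
  fixes X :: "'a::metric_space set"
    and C :: "nat \<Rightarrow> ((nat \<Rightarrow> bool) \<Rightarrow> 'a) set"
    and k :: nat
    and Z :: "nat \<Rightarrow> 'z::ab_group_add set"
    and dZ :: "nat \<Rightarrow> 'z \<Rightarrow> 'z \<Rightarrow> real"
    and act :: "nat \<Rightarrow> 'z \<Rightarrow> 'a set \<Rightarrow> 'a set"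
  assumes "compact_nilspace X C"
    and "k_step_nilspace k X C"
    and "\<forall>i\<in>{1..k}. structure_group X C i (Z i) (dZ i) (act i)"
    and "\<forall>i\<in>{1..k}. NSS_group (Z i) (dZ i)"
  shows "\<exists>\<psi> :: nat \<Rightarrow> 'a set \<Rightarrow> 'a set \<Rightarrow> 'z.
    (\<forall>i\<in>{1..k}. \<forall>y\<in>factor X C (i - 1). fiber_iso X C i y (Z i) (dZ i) (\<psi> i y)) \<and>
    (\<forall>\<epsilon>>0. \<exists>\<delta>>0. \<forall>i\<in>{1..k}. \<forall>y\<in>factor X C (i - 1). \<forall>a\<in>X. \<forall>b\<in>X.
        proj X C (i - 1) a = y \<longrightarrow> proj X C (i - 1) b = y \<longrightarrow> dist a b < \<delta> \<longrightarrow>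
        dZ i (\<psi> i y (proj X C i a)) (\<psi> i y (proj X C i b)) < \<epsilon>)"
proof -
  have N: "nilspace X C" and K: "compact X"
    using assms(1) unfolding compact_nilspace_def by auto
  have S: "structure_group X C i (Z i) (dZ i) (act i)" and H: "Hausdorff_space (factor_top X C i)"
    if "i \<in> {1..k}" for i
    using assms(3) that Hausdorff_space_factor_top[OF assms(1), of i Z dZ act] by auto
  define base where "base i y = (SOME A. A \<in> fiber X C i y)" for i y
  have base: "base i y \<in> fiber X C i y" if "y \<in> factor X C (i - 1)" for i y
    unfolding base_def using fiber_nonempty[OF that] by (simp add: some_in_eq)
  define \<psi> where "\<psi> i y = orbit_chart (Z i) (act i) (base i y)" for i y
  have "fiber_iso X C i y (Z i) (dZ i) (\<psi> i y)" if "i \<in> {1..k}" "y \<in> factor X C (i - 1)" for i y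
    unfolding \<psi>_def using fiber_iso_orbit_chart[OF N S H base] that by blast
  moreover have "\<forall>\<^sub>F \<delta> in at_right 0. \<forall>i\<in>{1..k}. \<forall>y\<in>factor X C (i - 1). \<forall>a\<in>X. \<forall>b\<in>X.
      proj X C (i - 1) a = y \<longrightarrow> proj X C (i - 1) b = y \<longrightarrow> dist a b < \<delta> \<longrightarrow>
      dZ i (\<psi> i y (proj X C i a)) (\<psi> i y (proj X C i b)) < \<epsilon>" if "\<epsilon> > 0" for \<epsilon>
    using orbit_chart_uniform[OF K S H that base, folded \<psi>_def] by (intro eventually_ball_finite) auto
  ultimately show ?thesis
    by (blast dest: eventually_at_right_0_imp_ex_pos)
qed

end
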